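(* Let $N\ge2$, $0=t_0<t_1<\dots<t_N=1$, $\delta_i:=t_i-t_{i-1}$, and assume $\alpha\delta\le\delta_i\le\delta$ for each $i\in\{1,\dots,N\}$, where $\alpha,\delta>0$. Let $\mathbf T$ be the $(N-1)\times(N-1)$ symmetric tridiagonal matrix with diagonal entries $\mathbf T_{i,i}=2(\delta_i+\delta_{i+1})$ and off-diagonal entries $\mathbf T_{i,i+1}=\mathbf T_{i+1,i}=\delta_{i+1}$. Then $\mathbf T$ is invertible and for all $i,j\in\{1,\dots,N-1\}$, $$|(\mathbf T^{-1})_{i,j}|\le\frac{1}{4\alpha^2(1+\alpha)^{|i-j|-1}}\,\frac1\delta.$$ *)

theory Defs
  imports Complex_Main "Jordan_Normal_Form.Matrix"
begin

text \<open>The (N-1)x(N-1) tridiagonal matrix T of the paper, with 0-based indices: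
  paper row i (1-based) is row i-1 here.\<close>

definition tri_T :: "nat \<Rightarrow> (nat \<Rightarrow> real) \<Rightarrow> real mat" where
  "tri_T N t = mat (N - 1) (N - 1) (\<lambda>(i, j).
     (let d = (\<lambda>k. t k - t (k - 1)) in
      if i = j then 2 * (d (i + 1) + d (i + 2))
      else if j = i + 1 then d (i + 2)
      else if i = j + 1 then d (j + 2)
      else 0))"

end

theory Submission
  imports Defs "Jordan_Normal_Form.Determinant"
begin

text \<open>Write \<open>d i = t i - t (i - 1)\<close>. If \<open>T y = w\<close>, then, \<open>T\<close> being diagonally dominant with
  nonnegative entries, \<open>|y|\<close> (extended by zero at the indices \<open>0\<close> and \<open>N\<close>) satisfies
  \<open>2 (d i + d (i+1)) |y i| \<le> d i |y (i-1)| + d (i+1) |y (i+1)| + |w i|\<close>.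
  At a maximum of \<open>|y|\<close> this gives \<open>|y| \<le> max |w| / (2 \<alpha> \<delta>)\<close>: with \<open>w = 0\<close> this is
  invertibility, with \<open>w = e j\<close> a bound on the \<open>j\<close>-th column of the inverse. Away from row \<open>j\<close>
  the term \<open>|w i|\<close> vanishes; at a maximum of \<open>|y|\<close> over the indices at distance \<open>> m\<close> from
  \<open>j\<close>, the neighbour away from \<open>j\<close> is no larger, and since the ratio of adjacent steps is at
  least \<open>\<alpha>\<close> the inequality forces a gain of \<open>1 + \<alpha>\<close> over the maximum at distance
  \<open>\<ge> m\<close>. The stated constant follows from \<open>2 \<alpha> \<le> 1 + \<alpha>\<close>.\<close>

text \<open>Shifts to the paper's 1-based indices and adds the boundary values \<open>y 0 = y N = 0\<close>,
  so that every row of \<open>tri_T\<close> reads \<open>d i y (i-1) + 2 (d i + d (i+1)) y i + d (i+1) y (i+1)\<close>.\<close>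

definition pad_vec :: "'a :: zero vec \<Rightarrow> nat \<Rightarrow> 'a" where
  "pad_vec v i = (if 0 < i \<and> i \<le> dim_vec v then v $ (i - 1) else 0)"

lemma tri_T_carrier: "tri_T N t \<in> carrier_mat (N - 1) (N - 1)"
  by (simp add: tri_T_def)

lemma index_tri_T_mult_vec:
  fixes t :: "nat \<Rightarrow> real"
  defines "d \<equiv> \<lambda>k. t k - t (k - 1)"
  assumes v: "v \<in> carrier_vec (N - 1)" and p: "p < N - 1"
  shows "(tri_T N t *\<^sub>v v) $ p = d (Suc p) * pad_vec v p
    + 2 * (d (Suc p) + d (Suc (Suc p))) * pad_vec v (Suc p) + d (Suc (Suc p)) * pad_vec v (Suc (Suc p))"
proof -
  have entry: "tri_T N t $$ (p, k) * v $ k =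
      (if 0 < p then if k = p - 1 then d (Suc p) * v $ k else 0 else 0)
      + (if k = p then 2 * (d (Suc p) + d (Suc (Suc p))) * v $ k else 0)
      + (if k = Suc p then d (Suc (Suc p)) * v $ k else 0)" if "k < N - 1" for k
    using p that unfolding tri_T_def d_def by auto
  have "(tri_T N t *\<^sub>v v) $ p = (\<Sum>k<N - 1. tri_T N t $$ (p, k) * v $ k)"
    using v p by (auto simp: scalar_prod_def tri_T_def lessThan_atLeast0 intro!: sum.cong)
  also have "\<dots> = d (Suc p) * pad_vec v p
    + 2 * (d (Suc p) + d (Suc (Suc p))) * pad_vec v (Suc p) + d (Suc (Suc p)) * pad_vec v (Suc (Suc p))"
    using v p by (simp add: entry sum.distrib pad_vec_def)
  finally show ?thesis .
qed

definition tridiag_subsolution ::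
    "nat \<Rightarrow> (nat \<Rightarrow> real) \<Rightarrow> (nat \<Rightarrow> real) \<Rightarrow> (nat \<Rightarrow> real) \<Rightarrow> bool" where
  "tridiag_subsolution N d r f \<longleftrightarrow> f 0 = 0 \<and> f N = 0 \<and> (\<forall>i. 0 \<le> f i) \<and>
     (\<forall>i. 0 < i \<longrightarrow> i < N \<longrightarrow>
        2 * (d i + d (Suc i)) * f i \<le> d i * f (i - 1) + d (Suc i) * f (Suc i) + r i)"

lemma tri_T_subsolution:
  fixes t :: "nat \<Rightarrow> real"
  defines "d \<equiv> \<lambda>k. t k - t (k - 1)"
  assumes steps: "\<And>i. 0 < i \<Longrightarrow> i \<le> N \<Longrightarrow> 0 \<le> d i" and v: "v \<in> carrier_vec (N - 1)"
  shows "tridiag_subsolution N d (\<lambda>i. \<bar>pad_vec (tri_T N t *\<^sub>v v) i\<bar>) (\<lambda>i. \<bar>pad_vec v i\<bar>)"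
  unfolding tridiag_subsolution_def
proof (intro conjI allI impI)
  fix i :: nat
  assume i: "0 < i" "i < N"
  then obtain p where p: "i = Suc p" "p < N - 1" by (cases i) auto
  let ?y = "pad_vec v" and ?w = "pad_vec (tri_T N t *\<^sub>v v)"
  have "?w i = (tri_T N t *\<^sub>v v) $ p"
    using p tri_T_carrier[of N t] by (simp add: pad_vec_def)
  then have row: "?w i = d i * ?y (i - 1) + 2 * (d i + d (Suc i)) * ?y i + d (Suc i) * ?y (Suc i)"
    using index_tri_T_mult_vec[OF v p(2)] p unfolding d_def by simp
  have "0 \<le> d i" "0 \<le> d (Suc i)" using steps i by auto
  then have "\<bar>2 * (d i + d (Suc i)) * ?y i\<bar> = 2 * (d i + d (Suc i)) * \<bar>?y i\<bar>"
    and "\<bar>d i * ?y (i - 1)\<bar> = d i * \<bar>?y (i - 1)\<bar>"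
    and "\<bar>d (Suc i) * ?y (Suc i)\<bar> = d (Suc i) * \<bar>?y (Suc i)\<bar>"
    by (simp_all add: abs_mult)
  with row show "2 * (d i + d (Suc i)) * \<bar>?y i\<bar>
      \<le> d i * \<bar>?y (i - 1)\<bar> + d (Suc i) * \<bar>?y (Suc i)\<bar> + \<bar>?w i\<bar>"
    by linarith
qed (use v in \<open>auto simp: pad_vec_def\<close>)

lemma tridiag_subsolution_bound:
  assumes sub: "tridiag_subsolution N d r f"
    and d: "\<And>i. 0 < i \<Longrightarrow> i \<le> N \<Longrightarrow> a \<le> d i" and a: "0 < a"
    and r: "\<And>i. 0 < i \<Longrightarrow> i < N \<Longrightarrow> r i \<le> R" and R: "0 \<le> R"
    and i: "i \<le> N"
  shows "f i \<le> R / (2 * a)"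
proof -
  obtain k where k: "k \<le> N" and max: "\<And>i. i \<le> N \<Longrightarrow> f i \<le> f k"
    using Max_in[of "f ` {..N}"] Max_ge[of "f ` {..N}"] by fastforce
  have "f k \<le> R / (2 * a)"
  proof (cases "0 < k \<and> k < N")
    case True
    then have "2 * (d k + d (Suc k)) * f k \<le> d k * f (k - 1) + d (Suc k) * f (Suc k) + r k"
      using sub unfolding tridiag_subsolution_def by blast
    also have "\<dots> \<le> d k * f k + d (Suc k) * f k + R"
      using True max[of "k - 1"] max[of "Suc k"] d[of k] d[of "Suc k"] a r[of k]
      by (intro add_mono mult_left_mono) auto
    finally have "(d k + d (Suc k)) * f k \<le> R" by (simp add: algebra_simps)
    moreover have "2 * a * f k \<le> (d k + d (Suc k)) * f k"
      using True d[of k] d[of "Suc k"] sub unfolding tridiag_subsolution_def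
      by (intro mult_right_mono) auto
    ultimately show ?thesis using a by (simp add: pos_le_divide_eq mult.commute)
  next
    case False
    then have "f k = 0" using k sub unfolding tridiag_subsolution_def by (auto simp: le_less)
    then show ?thesis using a R by simp
  qed
  then show ?thesis using max[OF i] by linarith
qed

lemma tridiag_decay_step:
  fixes a b x P \<alpha> :: real
  assumes "0 < a" "0 \<le> x" "\<alpha> * a \<le> b" and "2 * (a + b) * x \<le> a * P + b * x"
  shows "(1 + \<alpha>) * x \<le> P"
proof -
  have "(1 + \<alpha>) * a \<le> 2 * a + b" using assms by (simp add: algebra_simps)
  then have "(1 + \<alpha>) * a * x \<le> (2 * a + b) * x"
    using \<open>0 \<le> x\<close> by (rule mult_right_mono)
  then have "a * ((1 + \<alpha>) * x) \<le> (2 * a + b) * x" by (simp add: algebra_simps)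
  also have "\<dots> \<le> a * P" using assms by (simp add: algebra_simps)
  finally show ?thesis using \<open>0 < a\<close> by simp
qed

lemma tridiag_subsolution_decay:
  fixes \<alpha> M :: real
  assumes sub: "tridiag_subsolution N d r f"
    and d: "\<And>i. 0 < i \<Longrightarrow> i \<le> N \<Longrightarrow> 0 < d i"
    and ratio: "\<And>i. 0 < i \<Longrightarrow> i < N \<Longrightarrow> \<alpha> * d i \<le> d (Suc i) \<and> \<alpha> * d (Suc i) \<le> d i"
    and \<alpha>: "0 \<le> \<alpha>"
    and r: "\<And>i. 0 < i \<Longrightarrow> i < N \<Longrightarrow> i \<noteq> j \<Longrightarrow> r i \<le> 0"
    and M: "\<And>i. i \<le> N \<Longrightarrow> f i \<le> M"
  shows "i \<le> N \<Longrightarrow> j + m \<le> i \<or> i + m \<le> j \<Longrightarrow> f i \<le> M / (1 + \<alpha>) ^ m"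
proof (induction m arbitrary: i)
  case 0
  then show ?case using M by simp
next
  case (Suc m)
  let ?S = "{k. k \<le> N \<and> (j + Suc m \<le> k \<or> k + Suc m \<le> j)}"
  let ?P = "M / (1 + \<alpha>) ^ m"
  have "finite ?S" by simp
  then obtain k where k: "k \<in> ?S" and max: "\<And>l. l \<in> ?S \<Longrightarrow> f l \<le> f k"
    using Max_in[of "f ` ?S"] Max_ge[of "f ` ?S"] Suc.prems by fastforce
  have f: "f 0 = 0" "f N = 0" "\<And>i. 0 \<le> f i"
    and row: "\<And>i. 0 < i \<Longrightarrow> i < N \<Longrightarrow>
      2 * (d i + d (Suc i)) * f i \<le> d i * f (i - 1) + d (Suc i) * f (Suc i) + r i"
    using sub unfolding tridiag_subsolution_def by blast+
  txt \<open>The neighbour of \<open>k\<close> away from \<open>j\<close> lies in \<open>?S\<close>, the one towards \<open>j\<close> is covered by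
    the induction hypothesis.\<close>
  have "(1 + \<alpha>) * f k \<le> ?P"
  proof (cases "0 < k \<and> k < N")
    case True
    have dk: "0 < d k" "0 < d (Suc k)" using d True by auto
    have row_k: "2 * (d k + d (Suc k)) * f k \<le> d k * f (k - 1) + d (Suc k) * f (Suc k)"
      using row[of k] r[of k] True k by auto
    consider "j + Suc m \<le> k" | "k + Suc m \<le> j" using k by auto
    then show ?thesis
    proof cases
      case 1
      have "f (k - 1) \<le> ?P" using 1 k by (intro Suc.IH) auto
      moreover have "f (Suc k) \<le> f k" using max[of "Suc k"] 1 True by auto
      ultimately have "d k * f (k - 1) \<le> d k * ?P" "d (Suc k) * f (Suc k) \<le> d (Suc k) * f k"
        using dk by (metis less_imp_le mult_left_mono)+
      then have "2 * (d k + d (Suc k)) * f k \<le> d k * ?P + d (Suc k) * f k"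
        using row_k by linarith
      then show ?thesis using tridiag_decay_step[of "d k" "f k" \<alpha> "d (Suc k)"] dk f ratio[of k] True by blast
    next
      case 2
      have "f (Suc k) \<le> ?P" using 2 True by (intro Suc.IH) auto
      moreover have "f (k - 1) \<le> f k" using max[of "k - 1"] 2 True by auto
      ultimately have "d (Suc k) * f (Suc k) \<le> d (Suc k) * ?P" "d k * f (k - 1) \<le> d k * f k"
        using dk by (metis less_imp_le mult_left_mono)+
      then have "2 * (d (Suc k) + d k) * f k \<le> d (Suc k) * ?P + d k * f k"
        using row_k by (simp add: algebra_simps)
      then show ?thesis using tridiag_decay_step[of "d (Suc k)" "f k" \<alpha> "d k"] dk f ratio[of k] True by blast
    qed
  next
    case False
    then have "f k = 0" using k f by (auto simp: le_less)
    moreover have "0 \<le> M" using M[of 0] f by simp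
    ultimately show ?thesis using \<alpha> by simp
  qed
  then have "f k * (1 + \<alpha>) ^ Suc m \<le> M"
    using \<alpha> by (simp add: pos_le_divide_eq mult_ac)
  then have "f k \<le> M / (1 + \<alpha>) ^ Suc m"
    using \<alpha> by (simp only: pos_le_divide_eq zero_less_power add_pos_nonneg zero_less_one)
  then show ?case using max[of i] Suc.prems by auto
qed

lemma invertible_tri_T:
  fixes t :: "nat \<Rightarrow> real"
  assumes steps: "\<And>i. 0 < i \<Longrightarrow> i \<le> N \<Longrightarrow> a \<le> t i - t (i - 1)" and a: "0 < a"
  shows "invertible_mat (tri_T N t)"
proof -
  have "v = 0\<^sub>v (N - 1)" if v: "v \<in> carrier_vec (N - 1)" and Tv: "tri_T N t *\<^sub>v v = 0\<^sub>v (N - 1)" for v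
  proof (rule eq_vecI)
    fix i
    assume i: "i < dim_vec (0\<^sub>v (N - 1) :: real vec)"
    have "tridiag_subsolution N (\<lambda>k. t k - t (k - 1))
        (\<lambda>k. \<bar>pad_vec (tri_T N t *\<^sub>v v) k\<bar>) (\<lambda>k. \<bar>pad_vec v k\<bar>)"
      using steps a by (intro tri_T_subsolution v) (meson less_imp_le order_trans)
    moreover have "pad_vec (tri_T N t *\<^sub>v v) = (\<lambda>_. 0)"
      using Tv by (auto simp: pad_vec_def fun_eq_iff)
    ultimately have "tridiag_subsolution N (\<lambda>k. t k - t (k - 1)) (\<lambda>_. 0) (\<lambda>k. \<bar>pad_vec v k\<bar>)"
      by simp
    then have "\<bar>pad_vec v (Suc i)\<bar> \<le> 0 / (2 * a)"
      by (rule tridiag_subsolution_bound) (use steps a i in auto)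
    then show "v $ i = 0\<^sub>v (N - 1) $ i" using v i by (simp add: pad_vec_def)
  qed (use v in simp)
  then have "det (tri_T N t) \<noteq> 0"
    using det_0_iff_vec_prod_zero[OF tri_T_carrier] by blast
  from det_non_zero_imp_unit[OF tri_T_carrier this, of undefined]
  show ?thesis
    unfolding invertible_mat_def inverts_mat_def Units_def ring_mat_def
    using tri_T_carrier[of N t] by auto
qed

lemma tri_T_solution_unit_vec_decay:
  fixes t :: "nat \<Rightarrow> real" and \<alpha> \<delta> :: real
  assumes mesh: "\<And>i. 0 < i \<Longrightarrow> i \<le> N \<Longrightarrow> \<alpha> * \<delta> \<le> t i - t (i - 1) \<and> t i - t (i - 1) \<le> \<delta>"
    and \<alpha>: "0 < \<alpha>" and \<delta>: "0 < \<delta>"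
    and v: "v \<in> carrier_vec (N - 1)" and Tv: "tri_T N t *\<^sub>v v = unit_vec (N - 1) j"
    and i: "i < N - 1" and ij: "j + m \<le> i \<or> i + m \<le> j"
  shows "\<bar>v $ i\<bar> \<le> 1 / (2 * (\<alpha> * \<delta>)) / (1 + \<alpha>) ^ m"
proof -
  let ?d = "\<lambda>k. t k - t (k - 1)" and ?f = "\<lambda>k. \<bar>pad_vec v k\<bar>"
    and ?r = "\<lambda>k. \<bar>pad_vec (unit_vec (N - 1) j :: real vec) k\<bar>"
  have \<alpha>\<delta>: "0 < \<alpha> * \<delta>" using \<alpha> \<delta> by simp
  have d: "0 < ?d k" if "0 < k" "k \<le> N" for k
    using mesh[OF that] \<alpha>\<delta> by linarith
  have sub: "tridiag_subsolution N ?d ?r ?f"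
    unfolding Tv[symmetric] using d by (intro tri_T_subsolution v less_imp_le)
  have r: "?r k = (if k = Suc j then 1 else 0)" if "0 < k" "k < N" for k
    using that by (cases k) (auto simp: pad_vec_def unit_vec_def)
  have M: "?f k \<le> 1 / (2 * (\<alpha> * \<delta>))" if "k \<le> N" for k
    by (rule tridiag_subsolution_bound[OF sub]) (use mesh \<alpha>\<delta> r that in auto)
  have "?f (Suc i) \<le> 1 / (2 * (\<alpha> * \<delta>)) / (1 + \<alpha>) ^ m"
  proof (rule tridiag_subsolution_decay[OF sub, where j = "Suc j"])
    show "\<alpha> * ?d k \<le> ?d (Suc k) \<and> \<alpha> * ?d (Suc k) \<le> ?d k" if "0 < k" "k < N" for k
    proof -
      have "\<alpha> * ?d k \<le> \<alpha> * \<delta>" "\<alpha> * ?d (Suc k) \<le> \<alpha> * \<delta>"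
        using mesh[of k] mesh[of "Suc k"] \<alpha> that by simp_all
      then show ?thesis using mesh[of k] mesh[of "Suc k"] that by auto
    qed
  qed (use d \<alpha> r M i ij in auto)
  then show ?thesis using i v by (simp add: pad_vec_def)
qed

lemma geometric_bound_le_powr_bound:
  fixes \<alpha> \<delta> :: real
  assumes "0 < \<alpha>" "\<alpha> \<le> 1" "0 < \<delta>"
  shows "1 / (2 * (\<alpha> * \<delta>)) / (1 + \<alpha>) ^ m \<le> 1 / (4 * \<alpha>^2 * (1 + \<alpha>) powr (real m - 1)) * (1 / \<delta>)"
proof -
  let ?x = "1 / (2 * (\<alpha> * \<delta>)) / (1 + \<alpha>) ^ m"
  have "(1 + \<alpha>) powr (real m - 1) = (1 + \<alpha>) ^ m / (1 + \<alpha>)"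
    using assms by (simp add: powr_diff powr_realpow)
  then have "1 / (4 * \<alpha>^2 * (1 + \<alpha>) powr (real m - 1)) * (1 / \<delta>) = (1 + \<alpha>) / (2 * \<alpha>) * ?x"
    using assms by (simp add: field_simps power2_eq_square)
  moreover have "1 \<le> (1 + \<alpha>) / (2 * \<alpha>)" and "0 \<le> ?x" using assms by simp_all
  ultimately show ?thesis using mult_right_mono[of 1 "(1 + \<alpha>) / (2 * \<alpha>)" ?x] by simp
qed

theorem lemma3:
  fixes N :: nat and t :: "nat \<Rightarrow> real" and \<alpha> \<delta> :: real
  assumes "N \<ge> 2"
    and "t 0 = 0" and "t N = 1"
    and "\<And>i. i < N \<Longrightarrow> t i < t (i + 1)"
    and "\<alpha> > 0" and "\<delta> > 0"
    and "\<And>i. 1 \<le> i \<Longrightarrow> i \<le> N \<Longrightarrow> \<alpha> * \<delta> \<le> t i - t (i - 1) \<and> t i - t (i - 1) \<le> \<delta>"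
  shows "invertible_mat (tri_T N t) \<and>
    (\<forall>B \<in> carrier_mat (N - 1) (N - 1). tri_T N t * B = 1\<^sub>m (N - 1) \<longrightarrow>
      (\<forall>i < N - 1. \<forall>j < N - 1.
         \<bar>B $$ (i, j)\<bar> \<le> 1 / (4 * \<alpha>^2 * (1 + \<alpha>) powr (\<bar>real i - real j\<bar> - 1)) * (1 / \<delta>)))"
proof -
  have mesh: "\<And>i. 0 < i \<Longrightarrow> i \<le> N \<Longrightarrow> \<alpha> * \<delta> \<le> t i - t (i - 1) \<and> t i - t (i - 1) \<le> \<delta>"
    using assms(7) by simp
  have "\<alpha> * \<delta> \<le> 1 * \<delta>" using mesh[of 1] assms(1) by simp
  then have "\<alpha> \<le> 1" using assms(6) by (simp only: mult_le_cancel_right_pos)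
  have "invertible_mat (tri_T N t)"
    using mesh assms(5,6) by (intro invertible_tri_T[of N "\<alpha> * \<delta>"]) auto
  moreover have "\<bar>B $$ (i, j)\<bar> \<le> 1 / (4 * \<alpha>^2 * (1 + \<alpha>) powr (\<bar>real i - real j\<bar> - 1)) * (1 / \<delta>)"
    if B: "B \<in> carrier_mat (N - 1) (N - 1)" "tri_T N t * B = 1\<^sub>m (N - 1)" and i: "i < N - 1" and j: "j < N - 1"
    for B i j
  proof -
    let ?m = "nat \<bar>int i - int j\<bar>"
    have Tv: "tri_T N t *\<^sub>v col B j = unit_vec (N - 1) j"
      using col_mult2[OF tri_T_carrier[of N t] B(1) j] B(2) j by simp
    have "\<bar>col B j $ i\<bar> \<le> 1 / (2 * (\<alpha> * \<delta>)) / (1 + \<alpha>) ^ ?m"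
      by (rule tri_T_solution_unit_vec_decay[OF mesh assms(5,6) _ Tv]) (use B i j in auto)
    also have "\<dots> \<le> 1 / (4 * \<alpha>^2 * (1 + \<alpha>) powr (real ?m - 1)) * (1 / \<delta>)"
      using assms(5) \<open>\<alpha> \<le> 1\<close> assms(6) by (rule geometric_bound_le_powr_bound)
    finally show ?thesis using B i j by (simp add: of_nat_diff)
  qed
  ultimately show ?thesis by blast
qed

end
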